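(* Let $A$ be an integral domain such that each nonzero principal ideal of $A$ has only finitely many associated primes and each of these associated primes has height $1$. Then every overring of $A$ that is finitely generated as an $A$-algebra, flat over $A$, and well-centered on $A$ is a localization of $A$.
   Context: A prime $P$ of $A$ is an associated prime of an ideal $I$ if there is $a\in A$ such that $P$ is a minimal prime over $(I:_A a)=\{r\in A: ra\in I\}$. An overring of $A$ is a subring of the field of fractions of $A$ containing $A$. $B$ is well-centered on $A$ if for each $b\in B$ there is a unit $u$ of $B$ with $ub\in A$. $B$ is a localization of $A$ if $B=S^{-1}A$ for a multiplicatively closed set $S$ of nonzero elements of $A$. *)

theory Defs
  imports "HOL-Computational_Algebra.Fraction_Field"
begin

text \<open>The integral domain A is the whole type 'a (class idom); its field of
fractions is 'a fract, with A embedded via a |-> Fract a 1.\<close>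

definition emb :: "'a::idom \<Rightarrow> 'a fract" where
  "emb a = Fract a 1"

definition is_ideal :: "'a::comm_ring_1 set \<Rightarrow> bool" where
  "is_ideal I \<longleftrightarrow> 0 \<in> I \<and> (\<forall>x\<in>I. \<forall>y\<in>I. x + y \<in> I) \<and> (\<forall>r. \<forall>x\<in>I. r * x \<in> I)"

definition is_prime_ideal :: "'a::comm_ring_1 set \<Rightarrow> bool" where
  "is_prime_ideal P \<longleftrightarrow> is_ideal P \<and> P \<noteq> UNIV \<and>
     (\<forall>a b. a * b \<in> P \<longrightarrow> a \<in> P \<or> b \<in> P)"

definition principal_ideal :: "'a::comm_ring_1 \<Rightarrow> 'a set" where
  "principal_ideal a = {a * r | r. True}"

definition colon :: "'a::comm_ring_1 set \<Rightarrow> 'a \<Rightarrow> 'a set" where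
  "colon I a = {r. r * a \<in> I}"

definition minimal_prime_over :: "'a::comm_ring_1 set \<Rightarrow> 'a set \<Rightarrow> bool" where
  "minimal_prime_over P J \<longleftrightarrow> is_prime_ideal P \<and> J \<subseteq> P \<and>
     \<not> (\<exists>Q. is_prime_ideal Q \<and> J \<subseteq> Q \<and> Q \<subset> P)"

definition associated_prime :: "'a::comm_ring_1 set \<Rightarrow> 'a set \<Rightarrow> bool" where
  "associated_prime I P \<longleftrightarrow> (\<exists>a. minimal_prime_over P (colon I a))"

text \<open>Height of a prime: supremum of lengths n of chains of primes
  P_0 \<subset> P_1 \<subset> ... \<subset> P_n = P.\<close>
definition prime_chain_to :: "'a::comm_ring_1 set \<Rightarrow> nat \<Rightarrow> bool" where
  "prime_chain_to P n \<longleftrightarrow> (\<exists>C :: nat \<Rightarrow> 'a set.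
     (\<forall>i\<le>n. is_prime_ideal (C i)) \<and> (\<forall>i<n. C i \<subset> C (Suc i)) \<and> C n = P)"

definition height_one :: "'a::comm_ring_1 set \<Rightarrow> bool" where
  "height_one P \<longleftrightarrow> is_prime_ideal P \<and> prime_chain_to P 1 \<and> \<not> prime_chain_to P 2"

definition subring :: "'b::comm_ring_1 set \<Rightarrow> bool" where
  "subring R \<longleftrightarrow> 0 \<in> R \<and> 1 \<in> R \<and> (\<forall>x\<in>R. \<forall>y\<in>R. x + y \<in> R \<and> x * y \<in> R \<and> - x \<in> R)"

definition overring :: "'a::idom fract set \<Rightarrow> bool" where
  "overring B \<longleftrightarrow> subring B \<and> range emb \<subseteq> B"

definition alg_generated :: "'a::idom fract set \<Rightarrow> 'a fract set" where
  "alg_generated S = \<Inter>{R. subring R \<and> range emb \<subseteq> R \<and> S \<subseteq> R}"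

definition finitely_generated_algebra :: "'a::idom fract set \<Rightarrow> bool" where
  "finitely_generated_algebra B \<longleftrightarrow> (\<exists>S. finite S \<and> S \<subseteq> B \<and> B = alg_generated S)"

text \<open>Flatness of B over A via the equational criterion (Stacks 00HK):
  every relation sum a_i b_i = 0 (a_i in A, b_i in B) is trivial.\<close>
definition flat_over :: "'a::idom fract set \<Rightarrow> bool" where
  "flat_over B \<longleftrightarrow> (\<forall>(n::nat) (a::nat \<Rightarrow> 'a) (b::nat \<Rightarrow> 'a fract).
     (\<forall>i<n. b i \<in> B) \<and> (\<Sum>i<n. emb (a i) * b i) = 0 \<longrightarrow>
     (\<exists>(m::nat) (c::nat \<Rightarrow> 'a fract) (d::nat \<Rightarrow> nat \<Rightarrow> 'a).
        (\<forall>j<m. c j \<in> B) \<and>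
        (\<forall>i<n. b i = (\<Sum>j<m. emb (d i j) * c j)) \<and>
        (\<forall>j<m. (\<Sum>i<n. a i * d i j) = 0)))"

definition unit_of :: "'a::idom fract set \<Rightarrow> 'a fract \<Rightarrow> bool" where
  "unit_of B u \<longleftrightarrow> u \<in> B \<and> (\<exists>v\<in>B. u * v = 1)"

definition well_centered :: "'a::idom fract set \<Rightarrow> bool" where
  "well_centered B \<longleftrightarrow> (\<forall>b\<in>B. \<exists>u. unit_of B u \<and> u * b \<in> range emb)"

definition is_localization :: "'a::idom fract set \<Rightarrow> bool" where
  "is_localization B \<longleftrightarrow> (\<exists>S :: 'a set. 1 \<in> S \<and> 0 \<notin> S \<and> (\<forall>x\<in>S. \<forall>y\<in>S. x * y \<in> S) \<and>
     B = {Fract a s | a s. s \<in> S})"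

end

theory Submission
  imports Defs
begin

text \<open>
  Call a height-one prime \<open>P\<close> of \<open>A\<close> nonsurviving if \<open>P B = B\<close>. By flatness the ideal of
  denominators \<open>(A :\<^sub>A b)\<close> of any \<open>b \<in> B\<close> extends to \<open>B\<close>, so every minimal prime over it
  is nonsurviving. Conversely a nonsurviving prime contains the ideal of denominators of one
  of the finitely many algebra generators of \<open>B\<close>, hence is an associated prime of a
  principal ideal; so there are only finitely many nonsurviving primes.

  Let \<open>P\<close> be nonsurviving and \<open>0 \<noteq> p \<in> P\<close>. As \<open>P\<close> is minimal over \<open>p A\<close>, \<open>P B = B\<close> gives
  \<open>t \<notin> P\<close> with \<open>t / p \<in> B\<close>. By prime avoidance there is \<open>d = p b\<close> with \<open>b \<in> B\<close> and \<open>d\<close> in no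
  nonsurviving prime; a unit \<open>u\<close> of \<open>B\<close> with \<open>u b \<in> A\<close> then has \<open>d\<close> among its denominators,
  so \<open>u \<in> A\<close>, and \<open>u d \<in> p A\<close> forces \<open>u \<in> P\<close>. The product \<open>s\<close> of such units, one for each
  nonsurviving prime, lies in all of them, hence in the radical of every \<open>(A :\<^sub>A b)\<close>;
  thus \<open>B = A[1/s]\<close>.
\<close>

section \<open>Ideals and prime ideals\<close>

lemma is_ideal_zero: "is_ideal I \<Longrightarrow> 0 \<in> I"
  by (simp add: is_ideal_def)

lemma is_ideal_add: "is_ideal I \<Longrightarrow> x \<in> I \<Longrightarrow> y \<in> I \<Longrightarrow> x + y \<in> I"
  by (simp add: is_ideal_def)

lemma is_ideal_mult_left: "is_ideal I \<Longrightarrow> x \<in> I \<Longrightarrow> r * x \<in> I"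
  by (simp add: is_ideal_def)

lemma is_ideal_mult_right: "is_ideal I \<Longrightarrow> x \<in> I \<Longrightarrow> x * r \<in> I"
  by (simp add: is_ideal_def mult.commute)

lemma is_ideal_diff: "is_ideal I \<Longrightarrow> x \<in> I \<Longrightarrow> y \<in> I \<Longrightarrow> x - y \<in> I"
  using is_ideal_add[of I x "(- 1) * y"] is_ideal_mult_left[of I y "- 1"] by simp

lemma is_ideal_sum: "is_ideal I \<Longrightarrow> (\<And>x. x \<in> A \<Longrightarrow> f x \<in> I) \<Longrightarrow> sum f A \<in> I"
  by (induct A rule: infinite_finite_induct) (auto simp: is_ideal_zero is_ideal_add)

lemma is_ideal_prod: "is_ideal I \<Longrightarrow> finite A \<Longrightarrow> x \<in> A \<Longrightarrow> f x \<in> I \<Longrightarrow> prod f A \<in> I"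
  by (simp add: prod.remove is_ideal_mult_right)

lemma principal_ideal_is_ideal: "is_ideal (principal_ideal p)"
  unfolding is_ideal_def principal_ideal_def
proof (intro conjI ballI allI)
  show "0 \<in> {p * r |r. True}"
    by (metis (mono_tags) mult_zero_right mem_Collect_eq)
  show "x + y \<in> {p * r |r. True}" if "x \<in> {p * r |r. True}" "y \<in> {p * r |r. True}" for x y
    using that by (auto simp: distrib_left[symmetric])
  show "c * x \<in> {p * r |r. True}" if "x \<in> {p * r |r. True}" for c x
    using that by (auto simp: mult.left_commute[of c p])
qed

lemma principal_ideal_self: "p \<in> principal_ideal p"
  unfolding principal_ideal_def by (metis (mono_tags) mult_1_right mem_Collect_eq)

lemma is_ideal_Union_chain:
  assumes "C \<noteq> {}" and ideal: "\<And>X. X \<in> C \<Longrightarrow> is_ideal X"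
    and chain: "\<And>X Y. X \<in> C \<Longrightarrow> Y \<in> C \<Longrightarrow> X \<subseteq> Y \<or> Y \<subseteq> X"
  shows "is_ideal (\<Union>C)"
  unfolding is_ideal_def
proof (intro conjI ballI allI)
  show "0 \<in> \<Union>C"
    using assms(1) ideal is_ideal_zero by blast
next
  fix x y assume "x \<in> \<Union>C" "y \<in> \<Union>C"
  then obtain X Y where XY: "X \<in> C" "Y \<in> C" "x \<in> X" "y \<in> Y" by blast
  then have "x \<in> X \<union> Y" "y \<in> X \<union> Y" "X \<union> Y \<in> C"
    using chain[OF XY(1,2)] by (auto simp: sup.absorb1 sup.absorb2)
  then show "x + y \<in> \<Union>C"
    using ideal is_ideal_add by blast
next
  fix r x assume "x \<in> \<Union>C"
  then show "r * x \<in> \<Union>C"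
    using ideal is_ideal_mult_left by blast
qed

lemma is_ideal_add_multiples:
  assumes "is_ideal Q"
  shows "is_ideal {q + a * r | q r. q \<in> Q}"
  unfolding is_ideal_def
proof (intro conjI ballI allI)
  show "0 \<in> {q + a * r | q r. q \<in> Q}"
    using is_ideal_zero[OF assms] by (metis (mono_tags) add_0 mult_zero_right mem_Collect_eq)
next
  fix x y assume "x \<in> {q + a * r | q r. q \<in> Q}" "y \<in> {q + a * r | q r. q \<in> Q}"
  then obtain q r q' r' where "x = q + a * r" "y = q' + a * r'" "q \<in> Q" "q' \<in> Q"
    by blast
  then have "x + y = (q + q') + a * (r + r')" "q + q' \<in> Q"
    using is_ideal_add[OF assms] by (simp_all add: algebra_simps)
  then show "x + y \<in> {q + a * r | q r. q \<in> Q}"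
    by blast
next
  fix c x assume "x \<in> {q + a * r | q r. q \<in> Q}"
  then obtain q r where x: "x = q + a * r" and "q \<in> Q"
    by blast
  have "c * x = c * q + a * (c * r)"
    unfolding x by (simp add: algebra_simps)
  moreover have "c * q \<in> Q"
    using assms \<open>q \<in> Q\<close> by (rule is_ideal_mult_left)
  ultimately show "c * x \<in> {q + a * r | q r. q \<in> Q}"
    by blast
qed

lemma is_prime_ideal_imp_ideal: "is_prime_ideal P \<Longrightarrow> is_ideal P"
  by (simp add: is_prime_ideal_def)

lemma is_prime_ideal_one: "is_prime_ideal P \<Longrightarrow> 1 \<notin> P"
  unfolding is_prime_ideal_def is_ideal_def by (metis UNIV_eq_I mult.right_neutral)

lemma is_prime_ideal_mult_iff: "is_prime_ideal P \<Longrightarrow> a * b \<in> P \<longleftrightarrow> a \<in> P \<or> b \<in> P"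
  unfolding is_prime_ideal_def by (metis is_ideal_mult_left is_ideal_mult_right)

lemma is_prime_ideal_prod_notin:
  "is_prime_ideal P \<Longrightarrow> (\<And>x. x \<in> A \<Longrightarrow> f x \<notin> P) \<Longrightarrow> prod f A \<notin> P"
  by (induct A rule: infinite_finite_induct) (auto simp: is_prime_ideal_one is_prime_ideal_mult_iff)

lemma is_prime_ideal_Inter_chain:
  assumes "C \<noteq> {}" and "\<And>X. X \<in> C \<Longrightarrow> is_prime_ideal X"
    and "\<And>X Y. X \<in> C \<Longrightarrow> Y \<in> C \<Longrightarrow> X \<subseteq> Y \<or> Y \<subseteq> X"
  shows "is_prime_ideal (\<Inter>C)"
proof -
  have "a \<in> \<Inter>C \<or> b \<in> \<Inter>C" if "a * b \<in> \<Inter>C" for a b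
  proof (rule ccontr)
    assume "\<not> ?thesis"
    then obtain X Y where XY: "X \<in> C" "Y \<in> C" "a \<notin> X" "b \<notin> Y" by blast
    then have "a \<in> X \<or> b \<in> X" "a \<in> Y \<or> b \<in> Y"
      using that assms(2) is_prime_ideal_mult_iff by blast+
    then show False
      using XY assms(3)[OF XY(1,2)] by blast
  qed
  moreover have "is_ideal (\<Inter>C)"
    using assms(2) is_prime_ideal_imp_ideal unfolding is_ideal_def by blast
  moreover have "1 \<notin> \<Inter>C"
    using assms(1,2) is_prime_ideal_one by blast
  ultimately show ?thesis
    unfolding is_prime_ideal_def by blast
qed

lemma maximal_ideal_avoiding_is_prime:
  fixes Q :: "'a::comm_ring_1 set"
  assumes Q: "is_ideal Q" "Q \<inter> M = {}" and "1 \<in> M"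
    and M_mult: "\<And>x y. x \<in> M \<Longrightarrow> y \<in> M \<Longrightarrow> x * y \<in> M"
    and Q_max: "\<And>J. is_ideal J \<Longrightarrow> Q \<subseteq> J \<Longrightarrow> J \<inter> M = {} \<Longrightarrow> J = Q"
  shows "is_prime_ideal Q"
proof -
  have meets_M: "\<exists>q r. q \<in> Q \<and> q + a * r \<in> M" if "a \<notin> Q" for a
  proof (rule ccontr)
    let ?J = "{q + a * r | q r. q \<in> Q}"
    assume "\<not> ?thesis"
    then have "?J \<inter> M = {}" by blast
    moreover have "Q \<subseteq> ?J"
      by (force intro: exI[of _ 0])
    ultimately have "?J = Q"
      using Q_max is_ideal_add_multiples[OF Q(1)] by blast
    moreover have "a \<in> ?J"
      using is_ideal_zero[OF Q(1)] by (force intro: exI[of _ 1])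
    ultimately show False
      using that by blast
  qed
  have "a \<in> Q \<or> b \<in> Q" if "a * b \<in> Q" for a b
  proof (rule ccontr)
    assume "\<not> ?thesis"
    then obtain q r q' r' where q: "q \<in> Q" "q' \<in> Q" and M: "q + a * r \<in> M" "q' + b * r' \<in> M"
      using meets_M by meson
    have "(q + a * r) * (q' + b * r') = q * (q' + b * r') + q' * (a * r) + (a * b) * (r * r')"
      by (simp add: algebra_simps)
    also have "\<dots> \<in> Q"
      using q that Q(1) by (simp add: is_ideal_add is_ideal_mult_right)
    finally show False
      using M_mult[OF M] Q(2) by blast
  qed
  moreover have "Q \<noteq> UNIV"
    using Q(2) \<open>1 \<in> M\<close> by blast
  ultimately show ?thesis
    using Q(1) unfolding is_prime_ideal_def by blast
qed

lemma prime_ideal_avoiding: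
  fixes I :: "'a::comm_ring_1 set"
  assumes "is_ideal I" and "1 \<in> M" and "\<And>x y. x \<in> M \<Longrightarrow> y \<in> M \<Longrightarrow> x * y \<in> M"
    and "I \<inter> M = {}"
  shows "\<exists>Q. is_prime_ideal Q \<and> I \<subseteq> Q \<and> Q \<inter> M = {}"
proof -
  define \<A> where "\<A> = {J. is_ideal J \<and> I \<subseteq> J \<and> J \<inter> M = {}}"
  have "\<exists>Q\<in>\<A>. \<forall>J\<in>\<A>. Q \<subseteq> J \<longrightarrow> J = Q"
  proof (rule subset_Zorn_nonempty)
    show "\<A> \<noteq> {}"
      using assms(1,4) by (auto simp: \<A>_def)
    show "\<Union>C \<in> \<A>" if "C \<noteq> {}" "subset.chain \<A> C" for C
      using that is_ideal_Union_chain[of C] by (auto simp: \<A>_def subset_chain_def)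
  qed
  then obtain Q where Q: "is_ideal Q" "I \<subseteq> Q" "Q \<inter> M = {}"
    and Q_max: "\<And>J. J \<in> \<A> \<Longrightarrow> Q \<subseteq> J \<Longrightarrow> J = Q"
    by (auto simp: \<A>_def)
  have "is_prime_ideal Q"
  proof (rule maximal_ideal_avoiding_is_prime[OF Q(1,3) assms(2,3)])
    show "J = Q" if "is_ideal J" "Q \<subseteq> J" "J \<inter> M = {}" for J
      using that Q(2) Q_max unfolding \<A>_def by blast
  qed
  then show ?thesis
    using Q(2,3) by blast
qed

lemma minimal_prime_over_exists:
  fixes I :: "'a::comm_ring_1 set"
  assumes "is_prime_ideal Q" and "I \<subseteq> Q"
  shows "\<exists>P. minimal_prime_over P I \<and> P \<subseteq> Q"
proof -
  define \<A> where "\<A> = {P. is_prime_ideal P \<and> I \<subseteq> P \<and> P \<subseteq> Q}"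
  have "\<exists>P\<in>\<A>. \<forall>P'\<in>\<A>. P' \<subseteq> P \<longrightarrow> P' = P"
  proof (rule predicate_Zorn)
    show "partial_order_on \<A> (relation_of (\<lambda>X Y. Y \<subseteq> X) \<A>)"
      by (auto simp: partial_order_on_def preorder_on_def refl_on_def trans_on_def
          antisym_on_def relation_of_def)
    show "\<exists>P\<in>\<A>. \<forall>X\<in>C. P \<subseteq> X" if "C \<in> Chains (relation_of (\<lambda>X Y. Y \<subseteq> X) \<A>)" for C
    proof (cases "C = {}")
      case True
      then show ?thesis
        using assms by (auto simp: \<A>_def)
    next
      case False
      have C: "C \<subseteq> \<A>"
        using Chains_relation_of[OF that] .
      have chain: "X \<subseteq> Y \<or> Y \<subseteq> X" if "X \<in> C" "Y \<in> C" for X Y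
        using \<open>C \<in> Chains _\<close> that by (auto simp: Chains_def relation_of_def)
      have "is_prime_ideal (\<Inter>C)"
        using is_prime_ideal_Inter_chain[OF False] chain C unfolding \<A>_def by blast
      moreover have "I \<subseteq> \<Inter>C" "\<Inter>C \<subseteq> Q"
        using C False unfolding \<A>_def by blast+
      ultimately have "\<Inter>C \<in> \<A>"
        by (simp add: \<A>_def)
      then show ?thesis
        by blast
    qed
  qed
  then obtain P where "P \<in> \<A>" and P_min: "\<And>P'. P' \<in> \<A> \<Longrightarrow> P' \<subseteq> P \<Longrightarrow> P' = P"
    by blast
  then have P: "is_prime_ideal P" "I \<subseteq> P" "P \<subseteq> Q"
    by (simp_all add: \<A>_def)
  have "P' \<in> \<A>" if "is_prime_ideal P'" "I \<subseteq> P'" "P' \<subset> P" for P'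
    using that P(3) unfolding \<A>_def by auto
  then have "minimal_prime_over P I"
    using P P_min unfolding minimal_prime_over_def by blast
  then show ?thesis
    using P(3) by blast
qed

lemma prime_ideal_Inter_not_subset:
  assumes "is_prime_ideal P" "finite G" "\<And>Q. Q \<in> G \<Longrightarrow> is_ideal Q"
    and "\<And>Q. Q \<in> G \<Longrightarrow> \<not> Q \<subseteq> P"
  shows "\<not> \<Inter>G \<subseteq> P"
proof -
  have "\<forall>Q\<in>G. \<exists>x. x \<in> Q \<and> x \<notin> P"
    using assms(4) by blast
  from bchoice[OF this] obtain e where e: "\<forall>Q\<in>G. e Q \<in> Q \<and> e Q \<notin> P" ..
  have "prod e G \<notin> P"
    by (rule is_prime_ideal_prod_notin[OF assms(1)]) (use e in blast)
  moreover have "prod e G \<in> Q" if "Q \<in> G" for Q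
    using is_ideal_prod[OF assms(3)[OF that] assms(2) that] e that by blast
  ultimately show ?thesis
    by blast
qed

lemma prime_avoidance_separating_element:
  assumes "finite G" and prime: "\<And>Q. Q \<in> G \<Longrightarrow> is_prime_ideal Q"
    and incomparable: "\<And>Q Q'. Q \<in> G \<Longrightarrow> Q' \<in> G \<Longrightarrow> Q \<subseteq> Q' \<Longrightarrow> Q = Q'"
    and "is_ideal I" and Q: "Q \<in> G" and "\<not> I \<subseteq> Q"
  shows "\<exists>a\<in>I. a \<notin> Q \<and> (\<forall>Q'\<in>G - {Q}. a \<in> Q')"
proof -
  obtain i where i: "i \<in> I" "i \<notin> Q"
    using \<open>\<not> I \<subseteq> Q\<close> by blast
  have "finite (G - {Q})"
    using assms(1) by simp
  moreover have "is_ideal Q'" if "Q' \<in> G - {Q}" for Q'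
    using that prime is_prime_ideal_imp_ideal by blast
  moreover have "\<not> Q' \<subseteq> Q" if "Q' \<in> G - {Q}" for Q'
    using that incomparable[of Q' Q] Q by blast
  ultimately obtain \<epsilon> where \<epsilon>: "\<epsilon> \<in> \<Inter>(G - {Q})" "\<epsilon> \<notin> Q"
    using prime_ideal_Inter_not_subset[OF prime[OF Q]] by blast
  have "i * \<epsilon> \<in> I"
    using \<open>is_ideal I\<close> i(1) by (rule is_ideal_mult_right)
  moreover have "i * \<epsilon> \<notin> Q"
    using i(2) \<epsilon>(2) is_prime_ideal_mult_iff[OF prime[OF Q]] by blast
  moreover have "i * \<epsilon> \<in> Q'" if "Q' \<in> G - {Q}" for Q'
    using \<epsilon>(1) that is_ideal_mult_left[OF is_prime_ideal_imp_ideal[OF prime], of Q' \<epsilon> i] by blast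
  ultimately show ?thesis
    by blast
qed

lemma prime_avoidance:
  assumes "finite G" and prime: "\<And>Q. Q \<in> G \<Longrightarrow> is_prime_ideal Q"
    and "\<And>Q Q'. Q \<in> G \<Longrightarrow> Q' \<in> G \<Longrightarrow> Q \<subseteq> Q' \<Longrightarrow> Q = Q'"
    and "is_ideal I" and "\<And>Q. Q \<in> G \<Longrightarrow> \<not> I \<subseteq> Q"
  shows "\<not> I \<subseteq> \<Union>G"
proof -
  have "\<exists>a. a \<in> I \<and> a \<notin> Q \<and> (\<forall>Q'\<in>G - {Q}. a \<in> Q')" if Q: "Q \<in> G" for Q
    using prime_avoidance_separating_element[OF assms(1-4) Q assms(5)[OF Q]] by blast
  then have "\<forall>Q\<in>G. \<exists>a. a \<in> I \<and> a \<notin> Q \<and> (\<forall>Q'\<in>G - {Q}. a \<in> Q')"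
    by blast
  from bchoice[OF this] obtain a where a: "\<forall>Q\<in>G. a Q \<in> I \<and> a Q \<notin> Q \<and> (\<forall>Q'\<in>G - {Q}. a Q \<in> Q')" ..
  have "sum a G \<notin> Q" if Q: "Q \<in> G" for Q
  proof
    have ideal: "is_ideal Q"
      using prime[OF Q] by (rule is_prime_ideal_imp_ideal)
    assume "sum a G \<in> Q"
    moreover have "sum a (G - {Q}) \<in> Q"
    proof (rule is_ideal_sum[OF ideal])
      show "a Q' \<in> Q" if "Q' \<in> G - {Q}" for Q'
        using a that Q by blast
    qed
    ultimately have "sum a G - sum a (G - {Q}) \<in> Q"
      by (rule is_ideal_diff[OF ideal])
    moreover have "sum a G - sum a (G - {Q}) = a Q"
      by (simp add: sum.remove[OF assms(1) Q])
    ultimately show False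
      using a Q by auto
  qed
  moreover have "sum a G \<in> I"
    by (rule is_ideal_sum[OF assms(4)]) (use a in blast)
  ultimately show ?thesis
    by blast
qed

section \<open>Height-one primes\<close>

lemma zero_is_prime_ideal: "is_prime_ideal ({0} :: 'a::idom set)"
proof -
  have "{0::'a} \<noteq> UNIV"
    using zero_neq_one by (metis UNIV_I singletonD)
  then show ?thesis
    unfolding is_prime_ideal_def is_ideal_def by simp
qed

lemma prime_chain_to_2I:
  fixes P Q :: "'a::idom set"
  assumes "is_prime_ideal Q" "is_prime_ideal P" "{0} \<subset> Q" "Q \<subset> P"
  shows "prime_chain_to P 2"
  unfolding prime_chain_to_def
proof (intro exI conjI allI impI)
  let ?C = "\<lambda>i::nat. if i = 0 then {0} else if i = 1 then Q else P"
  show "is_prime_ideal (?C i)" if "i \<le> 2" for i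
    using assms(1,2) zero_is_prime_ideal by auto
  show "?C i \<subset> ?C (Suc i)" if "i < 2" for i
    using that assms(3,4) by (auto simp: less_2_cases_iff)
  show "?C 2 = P"
    by simp
qed

lemma height_one_imp_prime: "height_one P \<Longrightarrow> is_prime_ideal P"
  by (simp add: height_one_def)

lemma height_one_prime_below:
  fixes P Q :: "'a::idom set"
  assumes "height_one P" "is_prime_ideal Q" "Q \<subset> P"
  shows "Q = {0}"
proof (rule ccontr)
  assume "Q \<noteq> {0}"
  then have "{0} \<subset> Q"
    using is_ideal_zero[OF is_prime_ideal_imp_ideal[OF assms(2)]] by blast
  then have "prime_chain_to P 2"
    using prime_chain_to_2I assms height_one_imp_prime by blast
  then show False
    using assms(1) by (simp add: height_one_def)
qed

lemma height_one_nonzero: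
  fixes P :: "'a::idom set"
  assumes "height_one P"
  shows "\<exists>x\<in>P. x \<noteq> 0"
proof -
  have "prime_chain_to P 1"
    using assms by (simp add: height_one_def)
  then obtain C :: "nat \<Rightarrow> 'a set"
    where C: "\<forall>i\<le>1. is_prime_ideal (C i)" "\<forall>i<1. C i \<subset> C (Suc i)" "C 1 = P"
    unfolding prime_chain_to_def by blast
  have "0 \<in> C 0"
    using C(1) is_ideal_zero[OF is_prime_ideal_imp_ideal] le0 by blast
  moreover obtain x where "x \<in> P" "x \<notin> C 0"
    using C(2,3) by auto
  ultimately show ?thesis
    by metis
qed

lemma height_one_minimal_prime_over:
  fixes P :: "'a::idom set"
  assumes "height_one P" "I \<subseteq> P" "x \<in> I" "x \<noteq> 0"
  shows "minimal_prime_over P I"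
  unfolding minimal_prime_over_def
proof (intro conjI notI)
  show "is_prime_ideal P" "I \<subseteq> P"
    using assms(1,2) by (simp_all add: height_one_imp_prime)
next
  assume "\<exists>Q. is_prime_ideal Q \<and> I \<subseteq> Q \<and> Q \<subset> P"
  then obtain Q where "is_prime_ideal Q" "I \<subseteq> Q" "Q \<subset> P"
    by blast
  then show False
    using height_one_prime_below[OF assms(1)] assms(3,4) by blast
qed

lemma height_one_subset_imp_eq:
  fixes P P' :: "'a::idom set"
  assumes "height_one P" "height_one P'" "P \<subseteq> P'"
  shows "P = P'"
proof (rule ccontr)
  assume "P \<noteq> P'"
  then have "P = {0}"
    using height_one_prime_below[OF assms(2) height_one_imp_prime[OF assms(1)]] assms(3) by blast
  then show False
    using height_one_nonzero[OF assms(1)] by blast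
qed

lemma height_one_power_in_principal:
  fixes P :: "'a::idom set"
  assumes "height_one P" "p \<in> P" "p \<noteq> 0" "q \<in> P"
  shows "\<exists>k r. r \<notin> P \<and> r * q ^ k \<in> principal_ideal p"
proof (rule ccontr)
  \<comment> \<open>Otherwise a prime containing \<open>p\<close> and avoiding every \<open>r q\<^sup>k\<close> with \<open>r \<notin> P\<close> would lie
    strictly between \<open>{0}\<close> and \<open>P\<close>.\<close>
  assume no_power: "\<not> ?thesis"
  define M where "M = {r * q ^ k | r k. r \<notin> P}"
  have P: "is_prime_ideal P"
    using assms(1) by (rule height_one_imp_prime)
  have in_M: "r * q ^ k \<in> M" if "r \<notin> P" for r k
    using that unfolding M_def by blast
  have "x * y \<in> M" if xy: "x \<in> M" "y \<in> M" for x y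
  proof -
    obtain r k s l where "x = r * q ^ k" "y = s * q ^ l" "r \<notin> P" "s \<notin> P"
      using xy unfolding M_def by blast
    then have "x * y = (r * s) * q ^ (k + l)" "r * s \<notin> P"
      using is_prime_ideal_mult_iff[OF P] by (auto simp: power_add ac_simps)
    then show ?thesis
      using in_M by metis
  qed
  moreover have "1 \<in> M"
    using in_M[of 1 0] is_prime_ideal_one[OF P] by simp
  moreover have "principal_ideal p \<inter> M = {}"
    using no_power unfolding M_def by blast
  ultimately obtain Q where Q: "is_prime_ideal Q" "principal_ideal p \<subseteq> Q" "Q \<inter> M = {}"
    using prime_ideal_avoiding[OF principal_ideal_is_ideal, of M p] by blast
  have "Q \<subseteq> P"
    using Q(3) in_M[of _ 0] by auto
  moreover have "q \<notin> Q"
    using Q(3) in_M[of 1 1] is_prime_ideal_one[OF P] by auto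
  ultimately have "Q = {0}"
    using height_one_prime_below[OF assms(1) Q(1)] assms(4) by blast
  then show False
    using Q(2) principal_ideal_self[of p] assms(3) by blast
qed

lemma height_one_avoiding_element:
  fixes P :: "'a::idom set"
  assumes P: "height_one P" and "finite G" and G: "\<And>Q. Q \<in> G \<Longrightarrow> height_one Q" and "P \<notin> G"
  shows "\<exists>p\<in>P. p \<noteq> 0 \<and> (\<forall>Q\<in>G. p \<notin> Q)"
proof (cases "G = {}")
  case True
  then show ?thesis
    using height_one_nonzero[OF P] by blast
next
  case False
  have "\<not> P \<subseteq> \<Union>G"
  proof (rule prime_avoidance)
    show "finite G"
      by fact
    show "is_prime_ideal Q" if "Q \<in> G" for Q
      using G[OF that] by (rule height_one_imp_prime)
    show "Q = Q'" if "Q \<in> G" "Q' \<in> G" "Q \<subseteq> Q'" for Q Q'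
      using height_one_subset_imp_eq[OF G G] that by blast
    show "is_ideal P"
      using P by (simp add: height_one_imp_prime is_prime_ideal_imp_ideal)
    show "\<not> P \<subseteq> Q" if "Q \<in> G" for Q
      using that height_one_subset_imp_eq[OF P G] \<open>P \<notin> G\<close> by blast
  qed
  then obtain p where p: "p \<in> P" "\<forall>Q\<in>G. p \<notin> Q"
    by blast
  obtain Q where "Q \<in> G"
    using False by blast
  then have "p \<noteq> 0"
    using p(2) is_ideal_zero[OF is_prime_ideal_imp_ideal[OF height_one_imp_prime[OF G]]] by metis
  then show ?thesis
    using p by blast
qed

section \<open>Subrings of the fraction field\<close>

lemma emb_0 [simp]: "emb 0 = 0"
  by (simp add: emb_def Zero_fract_def)

lemma emb_1 [simp]: "emb 1 = 1"
  by (simp add: emb_def One_fract_def)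

lemma emb_add [simp]: "emb (a + b) = emb a + emb b"
  by (simp add: emb_def)

lemma emb_mult [simp]: "emb (a * b) = emb a * emb b"
  by (simp add: emb_def)

lemma emb_uminus [simp]: "emb (- a) = - emb a"
  by (simp add: emb_def)

lemma emb_power [simp]: "emb (a ^ n) = emb a ^ n"
  by (induct n) simp_all

lemma emb_prod [simp]: "emb (prod f A) = (\<Prod>x\<in>A. emb (f x))"
  by (induct A rule: infinite_finite_induct) simp_all

lemma emb_eq_iff [simp]: "emb a = emb b \<longleftrightarrow> a = b"
  by (simp add: emb_def eq_fract)

lemma emb_eq_0_iff [simp]: "emb a = 0 \<longleftrightarrow> a = 0"
  using emb_eq_iff[of a 0] by (simp del: emb_eq_iff)

lemma Fract_eq_emb_divide: "Fract a b = emb a / emb b"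
  by (cases "b = 0") (simp_all add: emb_def eq_fract divide_fract)

lemma subringD:
  assumes "subring B"
  shows subring_zero: "0 \<in> B" and subring_one: "1 \<in> B"
    and subring_add: "x \<in> B \<Longrightarrow> y \<in> B \<Longrightarrow> x + y \<in> B"
    and subring_mult: "x \<in> B \<Longrightarrow> y \<in> B \<Longrightarrow> x * y \<in> B"
    and subring_uminus: "x \<in> B \<Longrightarrow> - x \<in> B"
  using assms by (auto simp: subring_def)

lemma subring_power: "subring B \<Longrightarrow> x \<in> B \<Longrightarrow> x ^ n \<in> B"
  by (induct n) (auto simp: subringD)

lemma subring_of_nat: "subring B \<Longrightarrow> of_nat n \<in> B"
  by (induct n) (auto simp: subringD)

lemma overring_emb: "overring B \<Longrightarrow> emb a \<in> B"
  by (auto simp: overring_def)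

lemma overring_imp_subring: "overring B \<Longrightarrow> subring B"
  by (simp add: overring_def)

lemma alg_generated_subset: "subring R \<Longrightarrow> range emb \<subseteq> R \<Longrightarrow> S \<subseteq> R \<Longrightarrow> alg_generated S \<subseteq> R"
  unfolding alg_generated_def by blast

lemma unit_of_mult:
  assumes "subring B" "unit_of B u" "unit_of B v"
  shows "unit_of B (u * v)"
proof -
  obtain u' v' where "u \<in> B" "v \<in> B" "u' \<in> B" "v' \<in> B" "u * u' = 1" "v * v' = 1"
    using assms(2,3) unfolding unit_of_def by blast
  moreover have "(u * v) * (u' * v') = (u * u') * (v * v')"
    by (simp add: ac_simps)
  ultimately show ?thesis
    unfolding unit_of_def using subring_mult[OF assms(1)] by auto
qed

lemma unit_of_one: "subring B \<Longrightarrow> unit_of B 1"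
  by (auto simp: unit_of_def subring_one)

lemma unit_of_prod: "subring B \<Longrightarrow> (\<And>x. x \<in> A \<Longrightarrow> unit_of B (f x)) \<Longrightarrow> unit_of B (prod f A)"
  by (induct A rule: infinite_finite_induct) (simp_all add: unit_of_one unit_of_mult)

lemma unit_of_power: "subring B \<Longrightarrow> unit_of B u \<Longrightarrow> unit_of B (u ^ n)"
  by (induct n) (simp_all add: unit_of_one unit_of_mult)

lemma unit_of_inverse: "unit_of B u \<Longrightarrow> inverse u \<in> B"
  unfolding unit_of_def by (metis inverse_unique)

definition is_submodule :: "'b::comm_ring_1 set \<Rightarrow> 'b set \<Rightarrow> bool" where
  "is_submodule B X \<longleftrightarrow> 0 \<in> X \<and> (\<forall>x\<in>X. \<forall>y\<in>X. x + y \<in> X) \<and> (\<forall>c\<in>B. \<forall>x\<in>X. c * x \<in> X)"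

lemma is_submodule_sum:
  "is_submodule B X \<Longrightarrow> (\<And>i. i \<in> A \<Longrightarrow> f i \<in> X) \<Longrightarrow> sum f A \<in> X"
  by (induct A rule: infinite_finite_induct) (auto simp: is_submodule_def)

lemma binomial_power_in_submodule:
  assumes B: "subring B" and X: "is_submodule B X"
    and "a \<in> B" "b \<in> B" "a ^ m \<in> X" "b ^ n \<in> X"
  shows "(a + b) ^ (m + n) \<in> X"
proof -
  have X_mult: "c * x \<in> X" if "c \<in> B" "x \<in> X" for c x
    using X that by (simp add: is_submodule_def)
  have coeff: "of_nat ((m + n) choose k) * a ^ i * b ^ j \<in> B" for k i j
    using B assms(3,4) by (simp add: subring_mult subring_power subring_of_nat)
  have "of_nat ((m + n) choose k) * a ^ k * b ^ (m + n - k) \<in> X" for k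
  proof (cases "m \<le> k")
    case True
    then have "a ^ k = a ^ (k - m) * a ^ m"
      by (simp add: power_add[symmetric])
    then have "of_nat ((m + n) choose k) * a ^ k * b ^ (m + n - k)
        = (of_nat ((m + n) choose k) * a ^ (k - m) * b ^ (m + n - k)) * a ^ m"
      by (simp add: ac_simps)
    then show ?thesis
      using X_mult[OF coeff assms(5)] by simp
  next
    case False
    then have "b ^ (m + n - k) = b ^ (m - k) * b ^ n"
      by (simp add: power_add[symmetric])
    then have "of_nat ((m + n) choose k) * a ^ k * b ^ (m + n - k)
        = (of_nat ((m + n) choose k) * a ^ k * b ^ (m - k)) * b ^ n"
      by (simp add: ac_simps)
    then show ?thesis
      using X_mult[OF coeff assms(6)] by simp
  qed
  then show ?thesis
    unfolding binomial_ring by (intro is_submodule_sum[OF X])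
qed

lemma is_submodule_radical:
  assumes B: "subring B" and X: "is_submodule B X"
  shows "is_submodule B {\<beta> \<in> B. \<exists>k. \<beta> ^ k \<in> X}"
  unfolding is_submodule_def
proof (intro conjI ballI)
  show "0 \<in> {\<beta> \<in> B. \<exists>k. \<beta> ^ k \<in> X}"
    using X subring_zero[OF B] by (auto simp: is_submodule_def intro: exI[of _ 1])
next
  fix x y assume "x \<in> {\<beta> \<in> B. \<exists>k. \<beta> ^ k \<in> X}" "y \<in> {\<beta> \<in> B. \<exists>k. \<beta> ^ k \<in> X}"
  then obtain m n where "x \<in> B" "y \<in> B" "x ^ m \<in> X" "y ^ n \<in> X"
    by blast
  then show "x + y \<in> {\<beta> \<in> B. \<exists>k. \<beta> ^ k \<in> X}"
    using binomial_power_in_submodule[OF B X] subring_add[OF B] by blast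
next
  fix c x assume "c \<in> B" "x \<in> {\<beta> \<in> B. \<exists>k. \<beta> ^ k \<in> X}"
  then obtain m where "x \<in> B" "x ^ m \<in> X"
    by blast
  then have "(c * x) ^ m \<in> X"
    using X subring_power[OF B \<open>c \<in> B\<close>] by (simp add: is_submodule_def power_mult_distrib)
  then show "c * x \<in> {\<beta> \<in> B. \<exists>k. \<beta> ^ k \<in> X}"
    using subring_mult[OF B \<open>c \<in> B\<close> \<open>x \<in> B\<close>] by blast
qed

section \<open>Denominators and localizations\<close>

definition denom_ideal :: "'a::idom fract \<Rightarrow> 'a set" where
  "denom_ideal b = {r. emb r * b \<in> range emb}"

lemma denom_idealI: "emb r * b = emb a \<Longrightarrow> r \<in> denom_ideal b"
  unfolding denom_ideal_def by (metis mem_Collect_eq rangeI)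

lemma denom_idealE:
  assumes "r \<in> denom_ideal b"
  obtains a where "emb r * b = emb a"
  using assms unfolding denom_ideal_def by blast

lemma is_ideal_denom_ideal: "is_ideal (denom_ideal b)"
  unfolding is_ideal_def
proof (intro conjI ballI allI)
  show "0 \<in> denom_ideal b"
    by (rule denom_idealI[of 0 b 0]) simp
  show "x + y \<in> denom_ideal b" if x: "x \<in> denom_ideal b" and y: "y \<in> denom_ideal b" for x y
  proof -
    obtain u v where "emb x * b = emb u" "emb y * b = emb v"
      using x y by (metis denom_idealE)
    then have "emb (x + y) * b = emb (u + v)"
      by (simp add: distrib_right)
    then show ?thesis
      by (rule denom_idealI)
  qed
  show "r * x \<in> denom_ideal b" if x: "x \<in> denom_ideal b" for r x
  proof -
    obtain u where "emb x * b = emb u"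
      using x by (rule denom_idealE)
    then have "emb (r * x) * b = emb (r * u)"
      by (simp add: mult.assoc)
    then show ?thesis
      by (rule denom_idealI)
  qed
qed

lemma denom_ideal_Fract: "z \<noteq> 0 \<Longrightarrow> denom_ideal (Fract y z) = colon (principal_ideal z) y"
  by (auto simp: denom_ideal_def colon_def principal_ideal_def emb_def eq_fract image_iff
      mult.commute)

lemma denom_ideal_eq_colon: "\<exists>y z. z \<noteq> 0 \<and> denom_ideal b = colon (principal_ideal z) y"
  by (cases b) (use denom_ideal_Fract in blast)

lemma mem_colon_principal_ideal_self: "z \<in> colon (principal_ideal z) y"
  by (auto simp: colon_def principal_ideal_def mult.commute)

lemma one_in_denom_ideal_iff: "1 \<in> denom_ideal b \<longleftrightarrow> b \<in> range emb"
  by (simp add: denom_ideal_def)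

lemma denom_ideal_add:
  assumes "s \<in> denom_ideal x" "t \<in> denom_ideal y"
  shows "s * t \<in> denom_ideal (x + y)"
proof -
  obtain u v where "emb s * x = emb u" "emb t * y = emb v"
    using assms by (metis denom_idealE)
  then have "emb (s * t) * (x + y) = emb (t * u + s * v)"
    by (simp add: algebra_simps)
  then show ?thesis
    by (rule denom_idealI)
qed

lemma denom_ideal_mult:
  assumes "s \<in> denom_ideal x" "t \<in> denom_ideal y"
  shows "s * t \<in> denom_ideal (x * y)"
proof -
  obtain u v where "emb s * x = emb u" "emb t * y = emb v"
    using assms by (metis denom_idealE)
  then have "emb (s * t) * (x * y) = emb (u * v)"
    by (simp add: algebra_simps)
  then show ?thesis
    by (rule denom_idealI)
qed

lemma denom_ideal_uminus: "s \<in> denom_ideal x \<Longrightarrow> s \<in> denom_ideal (- x)"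
  by (metis denom_idealE denom_idealI emb_uminus mult_minus_right)

definition localization_at :: "'a::idom set \<Rightarrow> 'a fract set" where
  "localization_at P = {f. \<not> denom_ideal f \<subseteq> P}"

lemma overring_localization_at:
  assumes "is_prime_ideal P"
  shows "overring (localization_at P)"
proof -
  have emb: "emb a \<in> localization_at P" for a
    using is_prime_ideal_one[OF assms] denom_idealI[of 1 "emb a" a]
    unfolding localization_at_def by auto
  have closed: "x + y \<in> localization_at P \<and> x * y \<in> localization_at P \<and> - x \<in> localization_at P"
    if xy: "x \<in> localization_at P" "y \<in> localization_at P" for x y
  proof -
    obtain s t where "s \<in> denom_ideal x" "t \<in> denom_ideal y" "s \<notin> P" "t \<notin> P"
      using xy unfolding localization_at_def by blast
    moreover have "s * t \<notin> P"
      using calculation(3,4) is_prime_ideal_mult_iff[OF assms] by blast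
    ultimately show ?thesis
      unfolding localization_at_def
      using denom_ideal_add denom_ideal_mult denom_ideal_uminus by blast
  qed
  show ?thesis
    unfolding overring_def subring_def
    using emb[of 0] emb[of 1] emb closed by auto
qed

lemma is_localization_powers:
  fixes B :: "'a::idom fract set"
  assumes ov: "overring B" and s: "unit_of B (emb s)"
    and den: "\<And>b. b \<in> B \<Longrightarrow> \<exists>N. s ^ N \<in> denom_ideal b"
  shows "is_localization B"
  unfolding is_localization_def
proof (intro exI conjI ballI)
  have "s \<noteq> 0"
    using s by (auto simp: unit_of_def)
  show "1 \<in> range (power s)" "0 \<notin> range (power s)"
    using \<open>s \<noteq> 0\<close> by (auto intro: range_eqI[of _ _ 0])
  show "x * y \<in> range (power s)" if "x \<in> range (power s)" "y \<in> range (power s)" for x y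
    using that by (auto simp flip: power_add)
  show "B = {Fract a r | a r. r \<in> range (power s)}"
  proof (intro set_eqI iffI)
    fix b assume "b \<in> B"
    then obtain N a where "emb (s ^ N) * b = emb a"
      using den by (blast elim: denom_idealE)
    then have "b = Fract a (s ^ N)"
      using \<open>s \<noteq> 0\<close> by (simp add: Fract_eq_emb_divide field_simps)
    then show "b \<in> {Fract a r | a r. r \<in> range (power s)}"
      by blast
  next
    fix b assume "b \<in> {Fract a r | a r. r \<in> range (power s)}"
    then obtain a N where "b = emb a * inverse (emb s ^ N)"
      by (auto simp: Fract_eq_emb_divide divide_inverse)
    moreover have "inverse (emb s ^ N) \<in> B"
      using unit_of_inverse[OF unit_of_power[OF overring_imp_subring[OF ov] s]] .
    ultimately show "b \<in> B"
      using ov by (simp add: overring_emb overring_imp_subring subring_mult)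
  qed
qed

section \<open>Extended ideals\<close>

definition extended_ideal :: "'a::idom fract set \<Rightarrow> 'a set \<Rightarrow> 'a fract set" where
  "extended_ideal B I = {\<Sum>k<n. emb (q k) * c k | (n::nat) q c. \<forall>k<n. q k \<in> I \<and> c k \<in> B}"

lemma extended_ideal_subset:
  assumes X: "is_submodule B X" and I: "\<And>q. q \<in> I \<Longrightarrow> emb q \<in> X"
  shows "extended_ideal B I \<subseteq> X"
proof
  fix f assume "f \<in> extended_ideal B I"
  then obtain n :: nat and q c where f: "f = (\<Sum>k<n. emb (q k) * c k)" and qc: "\<forall>k<n. q k \<in> I \<and> c k \<in> B"
    unfolding extended_ideal_def by blast
  have "c k * emb (q k) \<in> X" if "k < n" for k
    using X I qc that by (simp add: is_submodule_def)
  then show "f \<in> X"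
    unfolding f by (intro is_submodule_sum[OF X]) (simp add: mult.commute)
qed

lemma extended_ideal_mono: "I \<subseteq> J \<Longrightarrow> extended_ideal B I \<subseteq> extended_ideal B J"
  unfolding extended_ideal_def by blast

lemma is_submodule_localized_prime:
  assumes P: "is_prime_ideal P" and B: "B \<subseteq> localization_at P"
  shows "is_submodule B {f. \<exists>t a. t \<notin> P \<and> a \<in> P \<and> emb t * f = emb a}"
    (is "is_submodule B ?X")
  unfolding is_submodule_def
proof (intro conjI ballI)
  have X_I: "f \<in> ?X" if "t \<notin> P" "a \<in> P" "emb t * f = emb a" for t a f
    using that by blast
  show "0 \<in> ?X"
    using X_I[of 1 0 0] is_prime_ideal_one[OF P] is_ideal_zero[OF is_prime_ideal_imp_ideal[OF P]]
    by simp
  show "f + g \<in> ?X" if "f \<in> ?X" "g \<in> ?X" for f g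
  proof -
    obtain s a t b where "s \<notin> P" "a \<in> P" "emb s * f = emb a" "t \<notin> P" "b \<in> P" "emb t * g = emb b"
      using \<open>f \<in> ?X\<close> \<open>g \<in> ?X\<close> by blast
    moreover have "emb (s * t) * (f + g) = emb t * (emb s * f) + emb s * (emb t * g)"
      by (simp add: algebra_simps)
    ultimately have "s * t \<notin> P" "t * a + s * b \<in> P" "emb (s * t) * (f + g) = emb (t * a + s * b)"
      using is_prime_ideal_mult_iff[OF P] is_ideal_add[OF is_prime_ideal_imp_ideal[OF P]]
        is_ideal_mult_left[OF is_prime_ideal_imp_ideal[OF P]]
      by simp_all
    then show ?thesis
      by (rule X_I)
  qed
  show "c * f \<in> ?X" if "c \<in> B" "f \<in> ?X" for c f
  proof -
    obtain s where "s \<in> denom_ideal c" "s \<notin> P"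
      using B \<open>c \<in> B\<close> unfolding localization_at_def by blast
    then obtain u where "emb s * c = emb u"
      by (blast elim: denom_idealE)
    moreover obtain t a where "t \<notin> P" "a \<in> P" "emb t * f = emb a"
      using \<open>f \<in> ?X\<close> by blast
    moreover have "emb (s * t) * (c * f) = (emb s * c) * (emb t * f)"
      by (simp add: ac_simps)
    ultimately have "s * t \<notin> P" "u * a \<in> P" "emb (s * t) * (c * f) = emb (u * a)"
      using \<open>s \<notin> P\<close> is_prime_ideal_mult_iff[OF P] is_ideal_mult_left[OF is_prime_ideal_imp_ideal[OF P]]
      by simp_all
    then show ?thesis
      by (rule X_I)
  qed
qed

lemma one_notin_extended_ideal:
  assumes P: "is_prime_ideal P" and B: "B \<subseteq> localization_at P"
  shows "1 \<notin> extended_ideal B P"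
proof
  let ?X = "{f. \<exists>t a. t \<notin> P \<and> a \<in> P \<and> emb t * f = emb a}"
  have "emb q \<in> ?X" if "q \<in> P" for q
  proof -
    have "emb 1 * emb q = emb q"
      by simp
    then show ?thesis
      using that is_prime_ideal_one[OF P] by blast
  qed
  moreover assume "1 \<in> extended_ideal B P"
  ultimately have "1 \<in> ?X"
    using extended_ideal_subset[OF is_submodule_localized_prime[OF P B]] by blast
  then obtain t a where "t \<notin> P" "a \<in> P" "emb t * 1 = emb a"
    by blast
  then show False
    by simp
qed

lemma one_in_extended_ideal_alg_generated:
  assumes "is_prime_ideal P" and "1 \<in> extended_ideal (alg_generated S) P"
  shows "\<exists>g\<in>S. denom_ideal g \<subseteq> P"
proof (rule ccontr)
  assume "\<not> ?thesis"
  then have "S \<subseteq> localization_at P"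
    unfolding localization_at_def by blast
  then have "alg_generated S \<subseteq> localization_at P"
    using alg_generated_subset overring_localization_at[OF assms(1)] unfolding overring_def by blast
  then show False
    using one_notin_extended_ideal[OF assms(1)] assms(2) by blast
qed

lemma flat_one_in_extended_denom_ideal:
  assumes flat: "flat_over B" and "overring B" and "b \<in> B"
  shows "1 \<in> extended_ideal B (denom_ideal b)"
proof -
  obtain y z where b: "b = Fract y z" and "z \<noteq> 0"
    by (cases b)
  \<comment> \<open>Apply the equational criterion to the relation \<open>z \<cdot> b + (- y) \<cdot> 1 = 0\<close>.\<close>
  define a :: "nat \<Rightarrow> 'a" where "a i = (if i = 0 then z else - y)" for i
  define v :: "nat \<Rightarrow> 'a fract" where "v i = (if i = 0 then b else 1)" for i
  have "(\<Sum>i<2. emb (a i) * v i) = emb z * b - emb y"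
    by (simp add: a_def v_def numeral_2_eq_2)
  also have "\<dots> = 0"
    using \<open>z \<noteq> 0\<close> by (simp add: b emb_def eq_fract Zero_fract_def)
  finally have "(\<Sum>i<2. emb (a i) * v i) = 0" .
  moreover have "\<forall>i<2. v i \<in> B"
    using assms(2,3) by (auto simp: v_def overring_def subring_def)
  ultimately obtain m :: nat and c d where c: "\<forall>j<m. c j \<in> B"
    and v: "\<forall>i<2. v i = (\<Sum>j<m. emb (d i j) * c j)" and rel: "\<forall>j<m. (\<Sum>i<2. a i * d i j) = 0"
    using flat unfolding flat_over_def by blast
  have "d 1 j \<in> denom_ideal b" if "j < m" for j
  proof (rule denom_idealI)
    have "z * d 0 j = y * d 1 j"
      using rel that by (simp add: a_def numeral_2_eq_2)
    then show "emb (d 1 j) * b = emb (d 0 j)"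
      using \<open>z \<noteq> 0\<close> by (simp add: b emb_def eq_fract mult.commute)
  qed
  moreover have "1 = (\<Sum>j<m. emb (d 1 j) * c j)"
    using v[rule_format, of 1] by (simp add: v_def)
  ultimately show ?thesis
    unfolding extended_ideal_def using c by blast
qed

lemma is_submodule_localized_multiples:
  fixes B :: "'a::idom fract set"
  assumes ov: "overring B" and P: "is_prime_ideal P"
  shows "is_submodule B {\<beta>. \<exists>r \<gamma>. r \<notin> P \<and> \<gamma> \<in> B \<and> emb r * \<beta> = emb p * \<gamma>}"
    (is "is_submodule B ?X")
  unfolding is_submodule_def
proof (intro conjI ballI)
  have B: "subring B"
    using ov by (rule overring_imp_subring)
  have X_I: "\<beta> \<in> ?X" if "r \<notin> P" "\<gamma> \<in> B" "emb r * \<beta> = emb p * \<gamma>" for r \<gamma> \<beta>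
    using that by blast
  show "0 \<in> ?X"
    using X_I[of 1 0 0] is_prime_ideal_one[OF P] subring_zero[OF B] by simp
  show "x + y \<in> ?X" if "x \<in> ?X" "y \<in> ?X" for x y
  proof -
    obtain r \<gamma> s \<delta> where "r \<notin> P" "\<gamma> \<in> B" "emb r * x = emb p * \<gamma>"
      "s \<notin> P" "\<delta> \<in> B" "emb s * y = emb p * \<delta>"
      using \<open>x \<in> ?X\<close> \<open>y \<in> ?X\<close> by blast
    moreover have "emb (r * s) * (x + y) = emb s * (emb r * x) + emb r * (emb s * y)"
      by (simp add: algebra_simps)
    ultimately have "r * s \<notin> P" "emb s * \<gamma> + emb r * \<delta> \<in> B"
      "emb (r * s) * (x + y) = emb p * (emb s * \<gamma> + emb r * \<delta>)"
      using is_prime_ideal_mult_iff[OF P] B ov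
      by (simp_all add: algebra_simps subring_add subring_mult overring_emb)
    then show ?thesis
      by (rule X_I)
  qed
  show "c * x \<in> ?X" if "c \<in> B" "x \<in> ?X" for c x
  proof -
    obtain r \<gamma> where "r \<notin> P" "\<gamma> \<in> B" "emb r * x = emb p * \<gamma>"
      using \<open>x \<in> ?X\<close> by blast
    moreover have "emb r * (c * x) = c * (emb r * x)"
      by (simp add: ac_simps)
    ultimately have "r \<notin> P" "c * \<gamma> \<in> B" "emb r * (c * x) = emb p * (c * \<gamma>)"
      using subring_mult[OF B \<open>c \<in> B\<close>] by (simp_all add: ac_simps)
    then show ?thesis
      by (rule X_I)
  qed
qed

section \<open>Nonsurviving primes\<close>

definition nonsurviving_primes :: "'a::idom fract set \<Rightarrow> 'a set set" where
  "nonsurviving_primes B = {P. height_one P \<and> 1 \<in> extended_ideal B P}"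

lemma nonsurviving_primes_finite:
  fixes B :: "'a::idom fract set"
  assumes fin: "\<And>z::'a. z \<noteq> 0 \<Longrightarrow> finite {P. associated_prime (principal_ideal z) P}"
    and "finitely_generated_algebra B"
  shows "finite (nonsurviving_primes B)"
proof -
  obtain S where S: "finite S" "B = alg_generated S"
    using assms(2) unfolding finitely_generated_algebra_def by blast
  have "\<forall>g :: 'a fract. \<exists>z. z \<noteq> 0 \<and> (\<exists>y. denom_ideal g = colon (principal_ideal z) y)"
    using denom_ideal_eq_colon by blast
  from choice[OF this] obtain den :: "'a fract \<Rightarrow> 'a"
    where den: "\<forall>g. den g \<noteq> 0 \<and> (\<exists>y. denom_ideal g = colon (principal_ideal (den g)) y)"
    by blast
  have "nonsurviving_primes B \<subseteq> (\<Union>g\<in>S. {P. associated_prime (principal_ideal (den g)) P})"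
  proof
    fix P assume "P \<in> nonsurviving_primes B"
    then have P: "height_one P" and "1 \<in> extended_ideal B P"
      by (simp_all add: nonsurviving_primes_def)
    then obtain g where "g \<in> S" "denom_ideal g \<subseteq> P"
      using one_in_extended_ideal_alg_generated[OF height_one_imp_prime[OF P]] S(2) by blast
    moreover obtain y where "denom_ideal g = colon (principal_ideal (den g)) y"
      using den by blast
    ultimately have "minimal_prime_over P (colon (principal_ideal (den g)) y)"
      using height_one_minimal_prime_over[OF P] mem_colon_principal_ideal_self den by metis
    then show "P \<in> (\<Union>g\<in>S. {P. associated_prime (principal_ideal (den g)) P})"
      using \<open>g \<in> S\<close> unfolding associated_prime_def by blast
  qed
  moreover have "finite (\<Union>g\<in>S. {P. associated_prime (principal_ideal (den g)) P})"
    using S(1) fin den by simp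
  ultimately show ?thesis
    by (rule finite_subset)
qed

lemma minimal_prime_over_denom_ideal_nonsurviving:
  fixes B :: "'a::idom fract set"
  assumes ht: "\<forall>(z::'a) P. z \<noteq> 0 \<longrightarrow> associated_prime (principal_ideal z) P \<longrightarrow> height_one P"
    and "flat_over B" "overring B" "b \<in> B" and P: "minimal_prime_over P (denom_ideal b)"
  shows "P \<in> nonsurviving_primes B"
proof -
  obtain y z where "z \<noteq> 0" "denom_ideal b = colon (principal_ideal z) y"
    using denom_ideal_eq_colon by blast
  then have "height_one P"
    using ht P unfolding associated_prime_def by metis
  moreover have "1 \<in> extended_ideal B P"
    using flat_one_in_extended_denom_ideal[OF assms(2-4)] extended_ideal_mono[of "denom_ideal b" P B] P
    unfolding minimal_prime_over_def by blast
  ultimately show ?thesis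
    by (simp add: nonsurviving_primes_def)
qed

lemma nonsurviving_prime_avoiding:
  fixes B :: "'a::idom fract set"
  assumes ht: "\<forall>(z::'a) P. z \<noteq> 0 \<longrightarrow> associated_prime (principal_ideal z) P \<longrightarrow> height_one P"
    and "flat_over B" "overring B" "b \<in> B"
    and "1 \<in> M" "\<And>x y. x \<in> M \<Longrightarrow> y \<in> M \<Longrightarrow> x * y \<in> M" "denom_ideal b \<inter> M = {}"
  shows "\<exists>P\<in>nonsurviving_primes B. denom_ideal b \<subseteq> P \<and> P \<inter> M = {}"
proof -
  obtain Q where Q: "is_prime_ideal Q" "denom_ideal b \<subseteq> Q" "Q \<inter> M = {}"
    using prime_ideal_avoiding[OF is_ideal_denom_ideal assms(5,6,7)] by blast
  obtain P where P: "minimal_prime_over P (denom_ideal b)" "P \<subseteq> Q"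
    using minimal_prime_over_exists[OF Q(1,2)] by blast
  have "P \<in> nonsurviving_primes B"
    using minimal_prime_over_denom_ideal_nonsurviving[OF ht assms(2-4) P(1)] .
  moreover have "denom_ideal b \<subseteq> P"
    using P(1) by (simp add: minimal_prime_over_def)
  ultimately show ?thesis
    using P(2) Q(3) by blast
qed

lemma nonsurviving_prime_multiple_outside:
  fixes B :: "'a::idom fract set"
  assumes ov: "overring B" and P: "P \<in> nonsurviving_primes B" and "p \<in> P" "p \<noteq> 0"
  shows "\<exists>t \<gamma>. t \<notin> P \<and> \<gamma> \<in> B \<and> emb t = emb p * \<gamma>"
proof -
  \<comment> \<open>Since \<open>P\<close> is minimal over \<open>p A\<close>, every element of \<open>P\<close> lies in the radical \<open>R\<close> of
    the \<open>B\<close>-module \<open>X = p B\<^sub>P\<close>; as \<open>P B = B\<close>, also \<open>1 \<in> R\<close>.\<close>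
  have ht: "height_one P" and one: "1 \<in> extended_ideal B P"
    using P by (simp_all add: nonsurviving_primes_def)
  define X where "X = {\<beta>. \<exists>r \<gamma>. r \<notin> P \<and> \<gamma> \<in> B \<and> emb r * \<beta> = emb p * \<gamma>}"
  define R where "R = {\<beta> \<in> B. \<exists>k. \<beta> ^ k \<in> X}"
  have "is_submodule B R"
    unfolding R_def X_def
    using is_submodule_radical[OF overring_imp_subring[OF ov]
        is_submodule_localized_multiples[OF ov height_one_imp_prime[OF ht]]] .
  moreover have "emb q \<in> R" if q: "q \<in> P" for q
  proof -
    obtain k r where "r \<notin> P" "r * q ^ k \<in> principal_ideal p"
      using height_one_power_in_principal[OF ht \<open>p \<in> P\<close> \<open>p \<noteq> 0\<close> q] by blast
    then obtain a where "r * q ^ k = p * a"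
      unfolding principal_ideal_def by blast
    then have "emb r * emb q ^ k = emb p * emb a"
      by (metis emb_mult emb_power)
    then have "emb q ^ k \<in> X"
      unfolding X_def using \<open>r \<notin> P\<close> overring_emb[OF ov] by blast
    then show ?thesis
      unfolding R_def using overring_emb[OF ov, of q] by blast
  qed
  ultimately have "1 \<in> R"
    using extended_ideal_subset[of B R P] one by blast
  then obtain k where "1 ^ k \<in> X"
    unfolding R_def by blast
  then obtain t \<gamma> where "t \<notin> P" "\<gamma> \<in> B" "emb t * 1 = emb p * \<gamma>"
    unfolding X_def by auto
  then show ?thesis
    by auto
qed

lemma nonsurviving_prime_multiple_avoiding:
  fixes B :: "'a::idom fract set"
  assumes ov: "overring B" and fin: "finite (nonsurviving_primes B)"
    and P: "P \<in> nonsurviving_primes B"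
  shows "\<exists>p\<in>P. \<exists>d b. b \<in> B \<and> emb d = emb p * b \<and> (\<forall>Q\<in>nonsurviving_primes B. d \<notin> Q)"
proof -
  define G where "G = nonsurviving_primes B - {P}"
  have ht_P: "height_one P" and ht_G: "\<And>Q. Q \<in> G \<Longrightarrow> height_one Q"
    using P by (auto simp: G_def nonsurviving_primes_def)
  have prime: "is_prime_ideal P"
    using ht_P by (rule height_one_imp_prime)
  have "finite G" "P \<notin> G"
    using fin by (auto simp: G_def)
  obtain p where p: "p \<in> P" "p \<noteq> 0" "\<forall>Q\<in>G. p \<notin> Q"
    using height_one_avoiding_element[OF ht_P \<open>finite G\<close> ht_G \<open>P \<notin> G\<close>] by blast
  have "\<not> \<Inter>G \<subseteq> P"
    using prime_ideal_Inter_not_subset[OF prime \<open>finite G\<close>] ht_G height_one_imp_prime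
      is_prime_ideal_imp_ideal height_one_subset_imp_eq[OF _ ht_P] \<open>P \<notin> G\<close> by metis
  then obtain \<epsilon> where \<epsilon>: "\<epsilon> \<notin> P" "\<forall>Q\<in>G. \<epsilon> \<in> Q"
    by blast
  obtain t \<gamma> where t: "t \<notin> P" "\<gamma> \<in> B" "emb t = emb p * \<gamma>"
    using nonsurviving_prime_multiple_outside[OF ov P p(1,2)] by blast
  define d where "d = p + \<epsilon> * t"
  have "d \<notin> Q" if "Q \<in> nonsurviving_primes B" for Q
  proof (cases "Q = P")
    case True
    then show ?thesis
      using p(1) \<epsilon>(1) t(1) is_prime_ideal_mult_iff[OF prime]
        is_ideal_diff[OF is_prime_ideal_imp_ideal[OF prime], of d p] by (auto simp: d_def)
  next
    case False
    then have Q: "Q \<in> G" "is_ideal Q"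
      using that ht_G height_one_imp_prime is_prime_ideal_imp_ideal by (auto simp: G_def)
    then show ?thesis
      using p(3) \<epsilon>(2) is_ideal_diff[OF Q(2), of d "\<epsilon> * t"] is_ideal_mult_right[OF Q(2)]
      by (auto simp: d_def)
  qed
  moreover have "1 + emb \<epsilon> * \<gamma> \<in> B"
    using ov t(2) by (simp add: overring_emb overring_imp_subring subringD)
  moreover have "emb d = emb p * (1 + emb \<epsilon> * \<gamma>)"
    using t(3) by (simp add: d_def algebra_simps)
  ultimately show ?thesis
    using p(1) by blast
qed

lemma range_emb_if_denominator_outside_nonsurviving:
  fixes B :: "'a::idom fract set"
  assumes ht: "\<forall>(z::'a) P. z \<noteq> 0 \<longrightarrow> associated_prime (principal_ideal z) P \<longrightarrow> height_one P"
    and "flat_over B" "overring B" "b \<in> B"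
    and "d \<in> denom_ideal b" "\<forall>Q\<in>nonsurviving_primes B. d \<notin> Q"
  shows "b \<in> range emb"
proof (rule ccontr)
  assume "b \<notin> range emb"
  then have "denom_ideal b \<inter> {1} = {}"
    by (simp add: one_in_denom_ideal_iff)
  then obtain Q where "Q \<in> nonsurviving_primes B" "denom_ideal b \<subseteq> Q"
    using nonsurviving_prime_avoiding[OF ht assms(2-4), of "{1}"] by auto
  then show False
    using assms(5,6) by blast
qed

lemma nonsurviving_prime_contains_unit:
  fixes B :: "'a::idom fract set"
  assumes ht: "\<forall>(z::'a) P. z \<noteq> 0 \<longrightarrow> associated_prime (principal_ideal z) P \<longrightarrow> height_one P"
    and flat: "flat_over B" and ov: "overring B" and wc: "well_centered B"
    and fin: "finite (nonsurviving_primes B)" and P: "P \<in> nonsurviving_primes B"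
  shows "\<exists>v\<in>P. unit_of B (emb v)"
proof -
  obtain p d b where p: "p \<in> P" and "b \<in> B" "emb d = emb p * b"
    and d: "\<forall>Q\<in>nonsurviving_primes B. d \<notin> Q"
    using nonsurviving_prime_multiple_avoiding[OF ov fin P] by blast
  then obtain u a where u: "unit_of B u" "u * b = emb a"
    using wc unfolding well_centered_def by blast
  then have "emb d * u = emb (p * a)"
    using \<open>emb d = emb p * b\<close> by (simp add: ac_simps)
  then have "d \<in> denom_ideal u"
    by (rule denom_idealI)
  moreover have "u \<in> B"
    using u(1) by (simp add: unit_of_def)
  ultimately obtain v where v: "u = emb v"
    using range_emb_if_denominator_outside_nonsurviving[OF ht flat ov] d by blast
  have prime: "is_prime_ideal P"
    using P by (simp add: nonsurviving_primes_def height_one_imp_prime)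
  have "emb (v * d) = emb (p * a)"
    using \<open>emb d * u = emb (p * a)\<close> v by (simp add: mult.commute)
  then have "v * d \<in> P"
    using p is_ideal_mult_right[OF is_prime_ideal_imp_ideal[OF prime]] by (simp only: emb_eq_iff)
  then have "v \<in> P"
    using d P is_prime_ideal_mult_iff[OF prime] by blast
  then show ?thesis
    using u(1) v by blast
qed

lemma power_in_denom_ideal:
  fixes B :: "'a::idom fract set"
  assumes ht: "\<forall>(z::'a) P. z \<noteq> 0 \<longrightarrow> associated_prime (principal_ideal z) P \<longrightarrow> height_one P"
    and "flat_over B" "overring B" "b \<in> B" and s: "\<And>P. P \<in> nonsurviving_primes B \<Longrightarrow> s \<in> P"
  shows "\<exists>N. s ^ N \<in> denom_ideal b"
proof (rule ccontr)
  assume "\<not> ?thesis"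
  then have "denom_ideal b \<inter> range (power s) = {}"
    by blast
  moreover have "1 \<in> range (power s)"
    by (metis power_0 rangeI)
  moreover have "x * y \<in> range (power s)" if "x \<in> range (power s)" "y \<in> range (power s)" for x y
    using that by (auto simp flip: power_add)
  ultimately obtain P where "P \<in> nonsurviving_primes B" "P \<inter> range (power s) = {}"
    using nonsurviving_prime_avoiding[OF ht assms(2-4), of "range (power s)"] by blast
  then show False
    using s by (metis IntI empty_iff power_one_right rangeI)
qed

theorem theorem4p19:
  fixes B :: "'a::idom fract set"
  assumes "\<forall>x::'a. x \<noteq> 0 \<longrightarrow>
             finite {P. associated_prime (principal_ideal x) P} \<and>
             (\<forall>P. associated_prime (principal_ideal x) P \<longrightarrow> height_one P)"
    and "overring B"
    and "finitely_generated_algebra B"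
    and "flat_over B"
    and "well_centered B"
  shows "is_localization B"
proof -
  let ?F = "nonsurviving_primes B"
  have ht: "\<forall>(z::'a) P. z \<noteq> 0 \<longrightarrow> associated_prime (principal_ideal z) P \<longrightarrow> height_one P"
    and fin: "\<And>z::'a. z \<noteq> 0 \<Longrightarrow> finite {P. associated_prime (principal_ideal z) P}"
    using assms(1) by blast+
  have "finite ?F"
    using nonsurviving_primes_finite[OF fin assms(3)] .
  then have "\<forall>P\<in>?F. \<exists>v. v \<in> P \<and> unit_of B (emb v)"
    using nonsurviving_prime_contains_unit[OF ht assms(4,2,5)] by blast
  from bchoice[OF this] obtain v where v: "\<forall>P\<in>?F. v P \<in> P \<and> unit_of B (emb (v P))" ..
  define s where "s = (\<Prod>P\<in>?F. v P)"
  have unit: "unit_of B (emb s)"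
    unfolding s_def emb_prod using v by (intro unit_of_prod[OF overring_imp_subring[OF assms(2)]]) blast
  have s_in: "s \<in> P" if "P \<in> ?F" for P
  proof -
    have "is_ideal P"
      using that by (simp add: nonsurviving_primes_def height_one_imp_prime is_prime_ideal_imp_ideal)
    then show ?thesis
      unfolding s_def using is_ideal_prod[OF _ \<open>finite ?F\<close> that] v that by blast
  qed
  show ?thesis
  proof (rule is_localization_powers[OF assms(2) unit])
    show "\<exists>N. s ^ N \<in> denom_ideal b" if "b \<in> B" for b
      using power_in_denom_ideal[OF ht assms(4,2) that s_in] .
  qed
qed

end
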